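(* Let $\Phi=(A;\{E_i\}_{i=0}^d;A^*;\{E^*_i\}_{i=0}^d)$ be a tridiagonal system on $V$ with $d\ge1$, such that $(A,A^* )$ satisfies the $q$-Serre relations, with $E_iV$ the eigenspace of $A$ for $\theta_i=q^{2i-d}$ and $E^*_iV$ the eigenspace of $A^*$ for $\theta^*_i=q^{d-2i}$. Let $\{U_i\}_{i=0}^d$ be its split decomposition, $K:V\to V$ the linear map acting on $U_i$ as $q^{d-2i}I$, $t$ a scalar, $B=A$ and $B^*=tA^*+(1-t)K$. Then for $0\le i\le d$, on $U_i$ we have $$(B^*-\theta^*_1I)\cdots(B^*-\theta^*_iI)=t^i(A^*-\theta^*_1I)\cdots(A^*-\theta^*_iI),$$ and moreover $(B^*-\theta^*_1I)\cdots(B^*-\theta^*_iI)U_i\subseteq U_0$.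
   Context: $\mathcal K$ is an algebraically closed field; $V$ is a nonzero finite-dimensional vector space over $\mathcal K$; $q\in\mathcal K$ is nonzero and not a root of unity; $[3]_q=q^2+1+q^{-2}$. The $q$-Serre relations for $(X,Y)$: $X^3Y-[3]_qX^2YX+[3]_qXYX^2-YX^3=0$ and $Y^3X-[3]_qY^2XY+[3]_qYXY^2-XY^3=0$. Primitive idempotent of a diagonalizable $X$ for eigenvalue $\lambda_i$: $\prod_{j\ne i}\frac{X-\lambda_jI}{\lambda_i-\lambda_j}$. A tridiagonal system on $V$ is a sequence $(A;\{E_i\}_{i=0}^d;A^*;\{E^*_i\}_{i=0}^d)$ with $A,A^*$ diagonalizable, $\{E_i\}$, $\{E^*_i\}$ orderings of their primitive idempotents, $E_iA^*E_j=0$ and $E^*_iAE^*_j=0$ when $|i-j|>1$, and no subspaces other than $0,V$ invariant under both $A$ and $A^*$. Split decomposition: $U_i=(E^*_0V+\cdots+E^*_iV)\cap(E_iV+\cdots+E_dV)$; known: $V=U_0\oplus\cdots\oplus U_d$, $(A-\theta_iI)U_i\subseteq U_{i+1}$, $(A^*-\theta^*_iI)U_i\subseteq U_{i-1}$ ($U_{-1}=U_{d+1}=0$). *)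

theory Defs
  imports "Jordan_Normal_Form.Jordan_Normal_Form"
begin

text \<open>The vector space V is modelled as the column space K^n (n > 0), linear maps on V
  as n x n matrices over the field K.\<close>

definition diagonalizable_mat :: "'a::field mat \<Rightarrow> bool" where
  "diagonalizable_mat M \<longleftrightarrow> (\<exists>D. similar_mat M D \<and> diagonal_mat D)"

definition is_subspace :: "nat \<Rightarrow> 'a::field vec set \<Rightarrow> bool" where
  "is_subspace n W \<longleftrightarrow> W \<subseteq> carrier_vec n \<and> 0\<^sub>v n \<in> W \<and>
     (\<forall>u\<in>W. \<forall>v\<in>W. u + v \<in> W) \<and> (\<forall>c. \<forall>u\<in>W. c \<cdot>\<^sub>v u \<in> W)"

definition invariant_under :: "'a::field mat \<Rightarrow> 'a vec set \<Rightarrow> bool" where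
  "invariant_under M W \<longleftrightarrow> (\<forall>w\<in>W. M *\<^sub>v w \<in> W)"

definition img :: "nat \<Rightarrow> 'a::field mat \<Rightarrow> 'a vec set" where
  "img n M = {M *\<^sub>v v | v. v \<in> carrier_vec n}"

definition subspace_sum :: "nat \<Rightarrow> (nat \<Rightarrow> 'a::field vec set) \<Rightarrow> nat set \<Rightarrow> 'a vec set" where
  "subspace_sum n S I = {finsum_vec TYPE('a) n f I | f. \<forall>j\<in>I. f j \<in> S j}"

definition prim_idem :: "nat \<Rightarrow> 'a::field mat \<Rightarrow> (nat \<Rightarrow> 'a) \<Rightarrow> nat \<Rightarrow> nat \<Rightarrow> 'a mat" where
  "prim_idem n M th d i =
     foldr (\<lambda>j P. ((1 / (th i - th j)) \<cdot>\<^sub>m (M - th j \<cdot>\<^sub>m 1\<^sub>m n)) * P)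
       (filter (\<lambda>j. j \<noteq> i) [0..<Suc d]) (1\<^sub>m n)"

text \<open>A tridiagonal system (A; {E_i}; A*; {E*_i}) on K^n, where E_i is the primitive
  idempotent of A for eigenvalue th i and E*_i that of A* for eigenvalue ths i;
  the orderings of the primitive idempotents are encoded by the orderings th, ths of
  the eigenvalues.\<close>
definition tridiagonal_system ::
  "nat \<Rightarrow> nat \<Rightarrow> 'a::field mat \<Rightarrow> (nat \<Rightarrow> 'a) \<Rightarrow> 'a mat \<Rightarrow> (nat \<Rightarrow> 'a) \<Rightarrow> bool" where
  "tridiagonal_system n d A th As ths \<longleftrightarrow>
     A \<in> carrier_mat n n \<and> As \<in> carrier_mat n n \<and>
     diagonalizable_mat A \<and> diagonalizable_mat As \<and>
     inj_on th {0..d} \<and> inj_on ths {0..d} \<and>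
     {k. eigenvalue A k} = th ` {0..d} \<and> {k. eigenvalue As k} = ths ` {0..d} \<and>
     (\<forall>i\<le>d. \<forall>j\<le>d. (i > j + 1 \<or> j > i + 1) \<longrightarrow>
        prim_idem n A th d i * As * prim_idem n A th d j = 0\<^sub>m n n \<and>
        prim_idem n As ths d i * A * prim_idem n As ths d j = 0\<^sub>m n n) \<and>
     (\<forall>W. is_subspace n W \<and> invariant_under A W \<and> invariant_under As W \<longrightarrow>
        W = {0\<^sub>v n} \<or> W = carrier_vec n)"

definition split_comp ::
  "nat \<Rightarrow> nat \<Rightarrow> 'a::field mat \<Rightarrow> (nat \<Rightarrow> 'a) \<Rightarrow> 'a mat \<Rightarrow> (nat \<Rightarrow> 'a) \<Rightarrow> nat \<Rightarrow> 'a vec set" where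
  "split_comp n d A th As ths i =
     subspace_sum n (\<lambda>j. img n (prim_idem n As ths d j)) {0..i} \<inter>
     subspace_sum n (\<lambda>j. img n (prim_idem n A th d j)) {i..d}"

definition q_serre :: "nat \<Rightarrow> 'a::field \<Rightarrow> 'a mat \<Rightarrow> 'a mat \<Rightarrow> bool" where
  "q_serre n q X Y \<longleftrightarrow>
     (let c = q^2 + 1 + inverse (q^2) in
      X*X*X*Y - c \<cdot>\<^sub>m (X*X*Y*X) + c \<cdot>\<^sub>m (X*Y*X*X) - Y*X*X*X = 0\<^sub>m n n \<and>
      Y*Y*Y*X - c \<cdot>\<^sub>m (Y*Y*X*Y) + c \<cdot>\<^sub>m (Y*X*Y*Y) - X*Y*Y*Y = 0\<^sub>m n n)"

fun shifted_prod :: "nat \<Rightarrow> 'a::field mat \<Rightarrow> (nat \<Rightarrow> 'a) \<Rightarrow> nat \<Rightarrow> 'a mat" where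
  "shifted_prod n M ths 0 = 1\<^sub>m n"
| "shifted_prod n M ths (Suc i) = shifted_prod n M ths i * (M - ths (Suc i) \<cdot>\<^sub>m 1\<^sub>m n)"

end

theory Submission
  imports Defs "Jordan_Normal_Form.Jordan_Normal_Form_Uniqueness"
begin

(* On the split decomposition, A* - theta*_i I maps U_i into U_(i-1): it annihilates the
   E*_i-component of a vector of U_i, and by tridiagonality A* lowers the E-index by at most one.
   Since K acts on U_i as the scalar theta*_i, the map B* - theta*_i I = t A* + (1 - t) K - theta*_i I
   agrees with t (A* - theta*_i I) on U_i.  Descending U_i -> U_(i-1) -> ... -> U_0 gives both
   claims by induction on i.  Membership in U_i is decided through the kernel description
   U_i = {x. E*_k x = 0 for k > i and E_k x = 0 for k < i}, valid because the primitive idempotents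
   of a diagonalizable matrix are orthogonal idempotents summing to the identity. *)

lemma mat_diag_mult_vec: "v \<in> carrier_vec n \<Longrightarrow> mat_diag n f *\<^sub>v v = vec n (\<lambda>a. f a * v $ a)"
  by (rule eq_vecI) (auto simp: mat_diag_def scalar_prod_def sum.remove)

lemma diagonal_mat_eq_mat_diag:
  "D \<in> carrier_mat n n \<Longrightarrow> diagonal_mat D \<Longrightarrow> D = mat_diag n (\<lambda>a. D $$ (a, a))"
  by (rule eq_matI) (auto simp: mat_diag_def diagonal_mat_def)

lemma smult_zero_vec [simp]: "a \<cdot>\<^sub>v 0\<^sub>v n = (0\<^sub>v n :: 'a::mult_zero vec)"
  by (rule eq_vecI) auto

lemma zero_mat_mult_vec [simp]: "v \<in> carrier_vec n \<Longrightarrow> 0\<^sub>m nr n *\<^sub>v v = (0\<^sub>v nr :: 'a::semiring_0 vec)"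
  by (rule eq_vecI) (auto simp: scalar_prod_def)

lemma mult_mat_vec_zero [simp]: "M \<in> carrier_mat nr n \<Longrightarrow> M *\<^sub>v 0\<^sub>v n = (0\<^sub>v nr :: 'a::semiring_0 vec)"
  by (rule eq_vecI) auto

lemma smult_mat_mult_vec:
  "A \<in> carrier_mat nr n \<Longrightarrow> v \<in> carrier_vec n \<Longrightarrow> (c \<cdot>\<^sub>m A) *\<^sub>v v = c \<cdot>\<^sub>v (A *\<^sub>v v :: 'a::comm_ring vec)"
  by (rule eq_vecI) (auto simp: scalar_prod_def sum_distrib_left mult.assoc)

lemma shift_mult_vec:
  fixes M :: "'a::comm_ring_1 mat"
  shows "M \<in> carrier_mat n n \<Longrightarrow> u \<in> carrier_vec n \<Longrightarrow> (M - c \<cdot>\<^sub>m 1\<^sub>m n) *\<^sub>v u = M *\<^sub>v u - c \<cdot>\<^sub>v u"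
  by (simp add: minus_mult_distrib_mat_vec smult_mat_mult_vec[OF one_carrier_mat])

lemma shifted_prod_carrier: "M \<in> carrier_mat n n \<Longrightarrow> shifted_prod n M c i \<in> carrier_mat n n"
  by (induction i) auto

lemma finsum_vec_cong:
  assumes "\<And>j. j \<in> I \<Longrightarrow> f j = g j" and "\<And>j. j \<in> I \<Longrightarrow> g j \<in> carrier_vec n"
  shows "finsum_vec TYPE('a::comm_monoid_add) n f I = finsum_vec TYPE('a) n g I"
  unfolding finsum_vec_def
  by (rule comm_monoid.finprod_cong'[OF comm_monoid_vec]) (auto simp: monoid_vec_simps assms)

lemma finsum_vec_zero:
  assumes "finite I" and "\<And>j. j \<in> I \<Longrightarrow> f j = 0\<^sub>v n"
  shows "finsum_vec TYPE('a::comm_monoid_add) n f I = 0\<^sub>v n"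
proof -
  have "finsum_vec TYPE('a) n f I = finsum_vec TYPE('a) n (\<lambda>_. 0\<^sub>v n) I"
    by (rule finsum_vec_cong[OF assms(2) zero_carrier_vec])
  also have "\<dots> = 0\<^sub>v n"
    using assms(1) by (intro eq_vecI) (auto simp: index_finsum_vec finsum_vec_closed)
  finally show ?thesis .
qed

lemma mult_mat_vec_finsum_vec:
  fixes M :: "'a::comm_semiring_0 mat"
  assumes M: "M \<in> carrier_mat nr n" and I: "finite I" and f: "\<And>j. j \<in> I \<Longrightarrow> f j \<in> carrier_vec n"
  shows "M *\<^sub>v finsum_vec TYPE('a) n f I = finsum_vec TYPE('a) nr (\<lambda>j. M *\<^sub>v f j) I"
proof (rule eq_vecI)
  have fI: "f \<in> I \<rightarrow> carrier_vec n" using f by auto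
  have Mf: "(\<lambda>j. M *\<^sub>v f j) \<in> I \<rightarrow> carrier_vec nr" using f M by auto
  fix i assume "i < dim_vec (finsum_vec TYPE('a) nr (\<lambda>j. M *\<^sub>v f j) I)"
  then have i: "i < nr" using finsum_vec_closed[OF Mf] by simp
  have "(M *\<^sub>v finsum_vec TYPE('a) n f I) $ i = (\<Sum>k<n. M $$ (i, k) * (\<Sum>j\<in>I. f j $ k))"
    using M i finsum_vec_closed[OF fI]
    by (simp add: scalar_prod_def index_finsum_vec[OF I _ fI] lessThan_atLeast0)
  also have "\<dots> = (\<Sum>j\<in>I. \<Sum>k<n. M $$ (i, k) * f j $ k)"
    by (simp add: sum_distrib_left sum.swap[of _ I])
  also have "\<dots> = finsum_vec TYPE('a) nr (\<lambda>j. M *\<^sub>v f j) I $ i"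
    using M i f[THEN carrier_vecD]
    by (auto simp: index_finsum_vec[OF I i Mf] scalar_prod_def lessThan_atLeast0 intro!: sum.cong)
  finally show "(M *\<^sub>v finsum_vec TYPE('a) n f I) $ i = finsum_vec TYPE('a) nr (\<lambda>j. M *\<^sub>v f j) I $ i" .
qed (use M f finsum_vec_closed[of f I n] finsum_vec_closed[of "\<lambda>j. M *\<^sub>v f j" I nr] in auto)

lemma finsum_mat_diag_mult_vec:
  assumes I: "finite I" and y: "y \<in> carrier_vec n" and f: "\<And>a. a < n \<Longrightarrow> (\<Sum>j\<in>I. f j a) = 1"
  shows "finsum_vec TYPE('a::comm_semiring_1) n (\<lambda>j. mat_diag n (f j) *\<^sub>v y) I = y"
proof -
  have Dy: "(\<lambda>j. mat_diag n (f j) *\<^sub>v y) \<in> I \<rightarrow> carrier_vec n"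
    using y by (intro Pi_I mult_mat_vec_carrier[OF mat_diag_dim])
  show ?thesis
  proof (rule eq_vecI)
    fix i assume "i < dim_vec y"
    then have i: "i < n" using y by simp
    have "finsum_vec TYPE('a) n (\<lambda>j. mat_diag n (f j) *\<^sub>v y) I $ i = (\<Sum>j\<in>I. (mat_diag n (f j) *\<^sub>v y) $ i)"
      by (rule index_finsum_vec[OF I i Dy])
    also have "\<dots> = (\<Sum>j\<in>I. f j i) * y $ i"
      using y i by (simp add: mat_diag_mult_vec sum_distrib_right)
    finally show "finsum_vec TYPE('a) n (\<lambda>j. mat_diag n (f j) *\<^sub>v y) I $ i = y $ i"
      using f[OF i] by simp
  qed (use finsum_vec_closed[OF Dy] y in simp)
qed

lemma mult_conjugate_mat:
  fixes P Q X Y :: "'a::semiring_1 mat"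
  assumes P: "P \<in> carrier_mat n n" and Q: "Q \<in> carrier_mat n n"
    and X: "X \<in> carrier_mat n n" and Y: "Y \<in> carrier_mat n n" and QP: "Q * P = 1\<^sub>m n"
  shows "(P * X * Q) * (P * Y * Q) = P * (X * Y) * Q"
proof -
  have "(P * X * Q) * (P * Y * Q) = (P * X) * ((Q * P) * (Y * Q))"
    using P Q X Y by (simp add: assoc_mult_mat[of _ n n _ n _ n])
  also have "\<dots> = (P * X) * (Y * Q)"
    using QP Y Q by simp
  also have "\<dots> = P * (X * Y) * Q"
    using P Q X Y by (simp add: assoc_mult_mat[of _ n n _ n _ n])
  finally show ?thesis .
qed

lemma similar_mat_wit_mult:
  assumes AB: "similar_mat_wit A B P Q" and AB': "similar_mat_wit A' B' P Q"
  shows "similar_mat_wit (A * A') (B * B') P Q"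
proof -
  define n where "n = dim_row A"
  note w = similar_mat_witD[OF n_def AB]
  have "dim_row A' = n"
    using similar_mat_witD(6)[OF refl AB'] w(6) by (metis carrier_matD(1))
  note w' = similar_mat_witD[OF this[symmetric] AB']
  have "A * A' = P * (B * B') * Q"
    unfolding w(3) w'(3) by (rule mult_conjugate_mat[OF w(6,7,5) w'(5) w(2)])
  then show ?thesis
    by (rule similar_mat_witI[OF w(1,2) _ mult_carrier_mat[OF w(4) w'(4)] mult_carrier_mat[OF w(5) w'(5)] w(6,7)])
qed

lemma similar_mat_wit_shift:
  fixes M :: "'a::field mat"
  assumes wit: "similar_mat_wit M D P Q" and M: "M \<in> carrier_mat n n"
  shows "similar_mat_wit (c \<cdot>\<^sub>m (M - s \<cdot>\<^sub>m 1\<^sub>m n)) (c \<cdot>\<^sub>m (D - s \<cdot>\<^sub>m 1\<^sub>m n)) P Q"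
proof -
  have D: "D \<in> carrier_mat n n" using similar_mat_witD2[OF M wit] by simp
  have "X - s \<cdot>\<^sub>m 1\<^sub>m n = char_matrix X s" if "X \<in> carrier_mat n n" for X :: "'a mat"
    using that by (auto simp: char_matrix_def intro!: eq_matI)
  then show ?thesis
    using similar_mat_wit_smult[OF similar_mat_wit_char_matrix[OF wit]] M D by simp
qed

lemma similar_mat_wit_prim_idem:
  assumes wit: "similar_mat_wit M D P Q" and M: "M \<in> carrier_mat n n"
  shows "similar_mat_wit (prim_idem n M th d j) (prim_idem n D th d j) P Q"
proof -
  have one: "similar_mat_wit (1\<^sub>m n) (1\<^sub>m n) P Q"
    using similar_mat_wit_pow[OF wit, of 0] similar_mat_witD2[OF M wit] M by simp
  have "similar_mat_wit (foldr (\<lambda>k X. (c k \<cdot>\<^sub>m (M - s k \<cdot>\<^sub>m 1\<^sub>m n)) * X) ks (1\<^sub>m n))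
      (foldr (\<lambda>k X. (c k \<cdot>\<^sub>m (D - s k \<cdot>\<^sub>m 1\<^sub>m n)) * X) ks (1\<^sub>m n)) P Q" for c s ks
  proof (induction ks)
    case (Cons k ks)
    show ?case using similar_mat_wit_mult[OF similar_mat_wit_shift[OF wit M] Cons.IH] by simp
  qed (simp add: one)
  then show ?thesis unfolding prim_idem_def .
qed

lemma eigenvalue_diagonal_entry:
  fixes M :: "'a::field mat"
  assumes M: "M \<in> carrier_mat n n" and sim: "similar_mat M D" and D: "diagonal_mat D" and a: "a < n"
  shows "eigenvalue M (D $$ (a, a))"
proof -
  have Dc: "D \<in> carrier_mat n n"
    using sim M unfolding similar_mat_def similar_mat_wit_def Let_def by auto
  have "upper_triangular D" using D Dc by (auto simp: diagonal_mat_def)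
  then have "char_poly D = (\<Prod>b \<leftarrow> diag_mat D. [:- b, 1:])"
    by (rule char_poly_upper_triangular[OF Dc])
  moreover have "D $$ (a, a) \<in> set (diag_mat D)" using a Dc by (auto simp: diag_mat_def)
  ultimately have "poly (char_poly D) (D $$ (a, a)) = 0"
    by (auto simp: poly_prod_list prod_list_zero_iff)
  then show ?thesis
    using char_poly_similar[OF sim] eigenvalue_root_char_poly[OF M] by simp
qed

lemma lagrange_basis_at_node:
  fixes th :: "nat \<Rightarrow> 'a::field"
  assumes inj: "inj_on th {0..d}" and j: "j \<le> d" and m: "m \<le> d"
  shows "(\<Prod>k\<in>{0..d}-{j}. (th m - th k) / (th j - th k)) = of_bool (m = j)"
proof (cases "m = j")
  case True
  have "th j \<noteq> th k" if "k \<in> {0..d}-{j}" for k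
    using that j inj by (auto dest: inj_onD)
  then show ?thesis using True by (simp add: prod.neutral)
next
  case False
  then show ?thesis using m by (auto intro!: prod_zero bexI[of _ m])
qed

lemma prim_idem_mat_diag:
  "prim_idem n (mat_diag n f) th d j = mat_diag n (\<lambda>a. \<Prod>k\<in>{0..d}-{j}. (f a - th k) / (th j - th k))"
proof -
  have foldr_diag: "foldr (\<lambda>k X. (c k \<cdot>\<^sub>m (mat_diag n f - s k \<cdot>\<^sub>m 1\<^sub>m n)) * X) ks (1\<^sub>m n)
      = mat_diag n (\<lambda>a. \<Prod>k\<leftarrow>ks. c k * (f a - s k))" for c s ks
  proof (induction ks)
    case (Cons k ks)
    have "c k \<cdot>\<^sub>m (mat_diag n f - s k \<cdot>\<^sub>m 1\<^sub>m n) = mat_diag n (\<lambda>a. c k * (f a - s k))"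
      by (auto simp: mat_diag_def intro!: eq_matI)
    then show ?case using Cons by simp
  qed simp
  have "set (filter (\<lambda>k. k \<noteq> j) [0..<Suc d]) = {0..d}-{j}" by auto
  then have prod_eq: "(\<Prod>k\<leftarrow>filter (\<lambda>k. k \<noteq> j) [0..<Suc d]. g k) = (\<Prod>k\<in>{0..d}-{j}. g k)"
    for g :: "nat \<Rightarrow> 'a"
    using prod.distinct_set_conv_list[of "filter (\<lambda>k. k \<noteq> j) [0..<Suc d]" g] by simp
  have "1 / (th j - th k) * (x - th k) = (x - th k) / (th j - th k)" for x k
    by simp
  then show ?thesis
    unfolding prim_idem_def foldr_diag prod_eq by simp
qed

definition resolution_of_identity :: "nat \<Rightarrow> nat \<Rightarrow> (nat \<Rightarrow> 'a::field mat) \<Rightarrow> bool" where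
  "resolution_of_identity n d E \<longleftrightarrow>
     (\<forall>j\<le>d. E j \<in> carrier_mat n n) \<and>
     (\<forall>j\<le>d. \<forall>k\<le>d. E k * E j = (if k = j then E j else 0\<^sub>m n n)) \<and>
     (\<forall>x\<in>carrier_vec n. finsum_vec TYPE('a) n (\<lambda>j. E j *\<^sub>v x) {0..d} = x)"

lemma subspace_sum_img_resolution_subset:
  assumes E: "resolution_of_identity n d E" and J: "J \<subseteq> {0..d}"
  shows "subspace_sum n (\<lambda>j. img n (E j)) J \<subseteq> {x \<in> carrier_vec n. \<forall>k\<in>{0..d}-J. E k *\<^sub>v x = 0\<^sub>v n}"
proof
  have Ec: "\<And>j. j \<le> d \<Longrightarrow> E j \<in> carrier_mat n n"
    and orth: "\<And>j k. j \<le> d \<Longrightarrow> k \<le> d \<Longrightarrow> E k * E j = (if k = j then E j else 0\<^sub>m n n)"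
    using E unfolding resolution_of_identity_def by auto
  fix x assume "x \<in> subspace_sum n (\<lambda>j. img n (E j)) J"
  then obtain f where x: "x = finsum_vec TYPE('a) n f J" and f: "\<And>j. j \<in> J \<Longrightarrow> f j \<in> img n (E j)"
    unfolding subspace_sum_def by auto
  have fc: "f j \<in> carrier_vec n" if "j \<in> J" for j
    using f[OF that] Ec[of j] J that unfolding img_def by auto
  have "E k *\<^sub>v f j = 0\<^sub>v n" if k: "k \<in> {0..d} - J" and j: "j \<in> J" for k j
  proof -
    obtain v where v: "v \<in> carrier_vec n" "f j = E j *\<^sub>v v" using f[OF j] unfolding img_def by auto
    have "k \<le> d" "j \<le> d" "k \<noteq> j" using k j J by auto
    then show ?thesis
      using v orth[of j k] assoc_mult_mat_vec[OF Ec[of k] Ec[of j] v(1), symmetric] by simp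
  qed
  then have "E k *\<^sub>v x = 0\<^sub>v n" if "k \<in> {0..d} - J" for k
    unfolding x using that finite_subset[OF J] fc
    by (simp add: mult_mat_vec_finsum_vec[OF Ec] finsum_vec_zero)
  moreover have "x \<in> carrier_vec n" unfolding x using fc by (intro finsum_vec_closed) auto
  ultimately show "x \<in> {x \<in> carrier_vec n. \<forall>k\<in>{0..d}-J. E k *\<^sub>v x = 0\<^sub>v n}" by auto
qed

lemma resolution_finsum_vec_supported:
  assumes E: "resolution_of_identity n d E" and J: "J \<subseteq> {0..d}" and x: "x \<in> carrier_vec n"
    and zero: "\<And>k. k \<in> {0..d} - J \<Longrightarrow> E k *\<^sub>v x = 0\<^sub>v n"
  shows "finsum_vec TYPE('a::field) n (\<lambda>j. E j *\<^sub>v x) J = x"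
proof -
  have Exc: "E j *\<^sub>v x \<in> carrier_vec n" if "j \<le> d" for j
    using E x that unfolding resolution_of_identity_def by auto
  have sum: "finsum_vec TYPE('a) n (\<lambda>j. E j *\<^sub>v x) {0..d} = x"
    using E x unfolding resolution_of_identity_def by auto
  have fJ: "(\<lambda>j. E j *\<^sub>v x) \<in> J \<rightarrow> carrier_vec n" using Exc J by auto
  then have Jc: "finsum_vec TYPE('a) n (\<lambda>j. E j *\<^sub>v x) J \<in> carrier_vec n"
    by (rule finsum_vec_closed)
  show ?thesis
  proof (rule eq_vecI)
    fix i assume "i < dim_vec x"
    then have i: "i < n" using x by simp
    have "finsum_vec TYPE('a) n (\<lambda>j. E j *\<^sub>v x) J $ i = (\<Sum>j\<in>J. (E j *\<^sub>v x) $ i)"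
      using index_finsum_vec[OF finite_subset[OF J] i fJ] by simp
    also have "\<dots> = (\<Sum>j\<in>{0..d}. (E j *\<^sub>v x) $ i)"
      using J zero i by (intro sum.mono_neutral_left) auto
    also have "\<dots> = x $ i"
      using sum index_finsum_vec[OF _ i, of "{0..d}" "\<lambda>j. E j *\<^sub>v x"] Exc by auto
    finally show "finsum_vec TYPE('a) n (\<lambda>j. E j *\<^sub>v x) J $ i = x $ i" .
  qed (use Jc x in simp)
qed

lemma subspace_sum_img_resolution:
  assumes E: "resolution_of_identity n d E" and J: "J \<subseteq> {0..d}"
  shows "subspace_sum n (\<lambda>j. img n (E j)) J = {x \<in> carrier_vec n. \<forall>k\<in>{0..d}-J. E k *\<^sub>v x = 0\<^sub>v n}"
proof (rule equalityI[OF subspace_sum_img_resolution_subset[OF E J] subsetI])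
  fix x assume "x \<in> {x \<in> carrier_vec n. \<forall>k\<in>{0..d}-J. E k *\<^sub>v x = 0\<^sub>v n}"
  then have "x = finsum_vec TYPE('a) n (\<lambda>j. E j *\<^sub>v x) J" and "x \<in> carrier_vec n"
    using resolution_finsum_vec_supported[OF E J] by auto
  then show "x \<in> subspace_sum n (\<lambda>j. img n (E j)) J"
    unfolding subspace_sum_def img_def by blast
qed

lemma resolution_band_mult_vec_zero:
  assumes E: "resolution_of_identity n d E" and X: "X \<in> carrier_mat n n" and x: "x \<in> carrier_vec n"
    and k: "k \<le> d"
    and band: "\<And>l. k + 1 < l \<Longrightarrow> l \<le> d \<Longrightarrow> E k * X * E l = 0\<^sub>m n n"
    and low: "\<And>l. l \<le> k + 1 \<Longrightarrow> l \<le> d \<Longrightarrow> E l *\<^sub>v x = 0\<^sub>v n"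
  shows "E k *\<^sub>v (X *\<^sub>v x) = 0\<^sub>v n"
proof -
  have Ec: "\<And>j. j \<le> d \<Longrightarrow> E j \<in> carrier_mat n n"
    and sum: "finsum_vec TYPE('a) n (\<lambda>l. E l *\<^sub>v x) {0..d} = x"
    using E x unfolding resolution_of_identity_def by auto
  have Ex: "E l *\<^sub>v x \<in> carrier_vec n" if "l \<in> {0..d}" for l
    using Ec[of l] that x by simp
  have "E k *\<^sub>v (X *\<^sub>v x) = E k *\<^sub>v (X *\<^sub>v finsum_vec TYPE('a) n (\<lambda>l. E l *\<^sub>v x) {0..d})"
    by (simp only: sum)
  also have "\<dots> = E k *\<^sub>v finsum_vec TYPE('a) n (\<lambda>l. X *\<^sub>v (E l *\<^sub>v x)) {0..d}"
    by (simp only: mult_mat_vec_finsum_vec[OF X finite_atLeastAtMost Ex])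
  also have "\<dots> = finsum_vec TYPE('a) n (\<lambda>l. E k *\<^sub>v (X *\<^sub>v (E l *\<^sub>v x))) {0..d}"
    using X Ex by (intro mult_mat_vec_finsum_vec[OF Ec[OF k] finite_atLeastAtMost]) simp
  also have "\<dots> = 0\<^sub>v n"
  proof (rule finsum_vec_zero)
    fix l assume "l \<in> {0..d}"
    then have l: "l \<le> d" by simp
    show "E k *\<^sub>v (X *\<^sub>v (E l *\<^sub>v x)) = 0\<^sub>v n"
    proof (cases "l \<le> k + 1")
      case True
      then show ?thesis using low[OF True l] Ec[OF k] X by simp
    next
      case False
      then have "(E k * X * E l) *\<^sub>v x = 0\<^sub>v n" using band[of l] l x by simp
      then show ?thesis
        using assoc_mult_mat_vec[OF mult_carrier_mat[OF Ec[OF k] X] Ec[OF l] x]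
          assoc_mult_mat_vec[OF Ec[OF k] X Ex] l by simp
    qed
  qed simp
  finally show ?thesis .
qed

lemma resolution_of_identity_cong:
  assumes "\<And>j. j \<le> d \<Longrightarrow> E j = E' j"
  shows "resolution_of_identity n d E \<longleftrightarrow> resolution_of_identity n d E'"
proof -
  have "finsum_vec TYPE('a::field) n (\<lambda>j. E j *\<^sub>v x) {0..d} = finsum_vec TYPE('a) n (\<lambda>j. E' j *\<^sub>v x) {0..d}"
    if "\<forall>j\<le>d. E' j \<in> carrier_mat n n" "x \<in> carrier_vec n" for x
    using assms that by (intro finsum_vec_cong) auto
  then show ?thesis unfolding resolution_of_identity_def using assms by auto
qed

lemma resolution_of_identity_conjugate_mat_diag:
  fixes P Q :: "'a::field mat"
  assumes P: "P \<in> carrier_mat n n" and Q: "Q \<in> carrier_mat n n"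
    and PQ: "P * Q = 1\<^sub>m n" and QP: "Q * P = 1\<^sub>m n"
    and orth: "\<And>j k a. j \<le> d \<Longrightarrow> k \<le> d \<Longrightarrow> f k a * f j a = (if k = j then f j a else 0)"
    and sum: "\<And>a. a < n \<Longrightarrow> (\<Sum>j\<in>{0..d}. f j a) = 1"
  shows "resolution_of_identity n d (\<lambda>j. P * mat_diag n (f j) * Q)"
  unfolding resolution_of_identity_def
proof (intro conjI allI impI ballI)
  fix j k assume "j \<le> d" "k \<le> d"
  then have "mat_diag n (f k) * mat_diag n (f j) = (if k = j then mat_diag n (f j) else 0\<^sub>m n n)"
    using orth unfolding mat_diag_diag by (auto simp: mat_diag_def intro!: eq_matI)
  then show "P * mat_diag n (f k) * Q * (P * mat_diag n (f j) * Q)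
      = (if k = j then P * mat_diag n (f j) * Q else 0\<^sub>m n n)"
    unfolding mult_conjugate_mat[OF P Q mat_diag_dim mat_diag_dim QP] using P Q by auto
next
  fix x :: "'a vec" assume x: "x \<in> carrier_vec n"
  define y where "y = Q *\<^sub>v x"
  have y: "y \<in> carrier_vec n" unfolding y_def using Q x by simp
  have Dy: "mat_diag n (f j) *\<^sub>v y \<in> carrier_vec n" for j
    using y by (rule mult_mat_vec_carrier[OF mat_diag_dim])
  have "finsum_vec TYPE('a) n (\<lambda>j. P * mat_diag n (f j) * Q *\<^sub>v x) {0..d}
      = finsum_vec TYPE('a) n (\<lambda>j. P *\<^sub>v (mat_diag n (f j) *\<^sub>v y)) {0..d}"
    unfolding y_def using P Q x Dy[unfolded y_def]
    by (intro finsum_vec_cong) (simp_all add: assoc_mult_mat_vec[of _ n n _ n])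
  also have "\<dots> = P *\<^sub>v finsum_vec TYPE('a) n (\<lambda>j. mat_diag n (f j) *\<^sub>v y) {0..d}"
    using Dy by (intro mult_mat_vec_finsum_vec[OF P, symmetric]) auto
  also have "\<dots> = P *\<^sub>v y"
    using y sum by (simp add: finsum_mat_diag_mult_vec)
  also have "\<dots> = x"
    unfolding y_def using P Q x PQ by (simp flip: assoc_mult_mat_vec)
  finally show "finsum_vec TYPE('a) n (\<lambda>j. P * mat_diag n (f j) * Q *\<^sub>v x) {0..d} = x" .
qed (use P Q in auto)

context
  fixes M :: "'a::field mat" and n d :: nat and th :: "nat \<Rightarrow> 'a"
  assumes M: "M \<in> carrier_mat n n" and diagonalizable: "diagonalizable_mat M"
    and inj: "inj_on th {0..d}" and spectrum: "{k. eigenvalue M k} = th ` {0..d}"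
begin

lemma prim_idem_diagonalization:
  obtains P Q e where "P \<in> carrier_mat n n" "Q \<in> carrier_mat n n" "Q * P = 1\<^sub>m n" "P * Q = 1\<^sub>m n"
    "M = P * mat_diag n e * Q" "\<And>a. a < n \<Longrightarrow> e a \<in> th ` {0..d}"
    "\<And>j. j \<le> d \<Longrightarrow> prim_idem n M th d j = P * mat_diag n (\<lambda>a. of_bool (e a = th j)) * Q"
proof -
  obtain D where sim: "similar_mat M D" and D: "diagonal_mat D"
    using diagonalizable unfolding diagonalizable_mat_def by auto
  then obtain P Q where wit: "similar_mat_wit M D P Q" unfolding similar_mat_def by auto
  note w = similar_mat_witD2[OF M wit]
  define e where "e a = D $$ (a, a)" for a
  have De: "D = mat_diag n e" unfolding e_def by (rule diagonal_mat_eq_mat_diag[OF w(5) D])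
  have e: "e a \<in> th ` {0..d}" if "a < n" for a
    using eigenvalue_diagonal_entry[OF M sim D that] spectrum unfolding e_def by auto
  have "prim_idem n D th d j = mat_diag n (\<lambda>a. of_bool (e a = th j))" if j: "j \<le> d" for j
  proof -
    have "(\<Prod>k\<in>{0..d}-{j}. (e a - th k) / (th j - th k)) = of_bool (e a = th j)" if "a < n" for a
    proof -
      obtain m where m: "m \<le> d" "e a = th m" using e[OF \<open>a < n\<close>] by auto
      then have "(m = j) = (e a = th j)" using inj j by (auto dest: inj_onD)
      then show ?thesis using lagrange_basis_at_node[OF inj j m(1)] m(2) by simp
    qed
    then show ?thesis unfolding De prim_idem_mat_diag by (auto simp: mat_diag_def intro!: eq_matI)
  qed
  then have "prim_idem n M th d j = P * mat_diag n (\<lambda>a. of_bool (e a = th j)) * Q" if "j \<le> d" for j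
    using similar_mat_witD(3)[OF refl similar_mat_wit_prim_idem[OF wit M]] that by simp
  with w De e show thesis using that by auto
qed

lemma resolution_of_identity_prim_idem: "resolution_of_identity n d (prim_idem n M th d)"
proof -
  obtain P Q e where P: "P \<in> carrier_mat n n" and Q: "Q \<in> carrier_mat n n"
    and QP: "Q * P = 1\<^sub>m n" and PQ: "P * Q = 1\<^sub>m n" and "M = P * mat_diag n e * Q"
    and e: "\<And>a. a < n \<Longrightarrow> e a \<in> th ` {0..d}"
    and E: "\<And>j. j \<le> d \<Longrightarrow> prim_idem n M th d j = P * mat_diag n (\<lambda>a. of_bool (e a = th j)) * Q"
    by (rule prim_idem_diagonalization) blast
  have "resolution_of_identity n d (\<lambda>j. P * mat_diag n (\<lambda>a. of_bool (e a = th j)) * Q)"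
  proof (rule resolution_of_identity_conjugate_mat_diag[OF P Q PQ QP])
    show "of_bool (e a = th k) * of_bool (e a = th j) = (if k = j then of_bool (e a = th j) else 0 :: 'a)"
      if "j \<le> d" "k \<le> d" for j k a
      using that inj by (auto dest: inj_onD)
    show "(\<Sum>j\<in>{0..d}. of_bool (e a = th j)) = (1 :: 'a)" if "a < n" for a
    proof -
      obtain m where m: "m \<le> d" "e a = th m" using e[OF \<open>a < n\<close>] by auto
      then have "(\<Sum>j\<in>{0..d}. of_bool (e a = th j)) = (\<Sum>j\<in>{0..d}. if m = j then 1 else 0 :: 'a)"
        using inj by (intro sum.cong) (auto dest: inj_onD)
      then show ?thesis using m(1) by simp
    qed
  qed
  then show ?thesis
    using resolution_of_identity_cong[of d "prim_idem n M th d"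
        "\<lambda>j. P * mat_diag n (\<lambda>a. of_bool (e a = th j)) * Q"] E by simp
qed

lemma prim_idem_mult_right:
  assumes j: "j \<le> d"
  shows "prim_idem n M th d j * M = th j \<cdot>\<^sub>m prim_idem n M th d j"
proof -
  obtain P Q e where P: "P \<in> carrier_mat n n" and Q: "Q \<in> carrier_mat n n" and QP: "Q * P = 1\<^sub>m n"
    and "P * Q = 1\<^sub>m n" and Me: "M = P * mat_diag n e * Q" and "\<And>a. a < n \<Longrightarrow> e a \<in> th ` {0..d}"
    and E: "\<And>j. j \<le> d \<Longrightarrow> prim_idem n M th d j = P * mat_diag n (\<lambda>a. of_bool (e a = th j)) * Q"
    by (rule prim_idem_diagonalization) blast
  have "mat_diag n (\<lambda>a. of_bool (e a = th j)) * mat_diag n e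
      = th j \<cdot>\<^sub>m mat_diag n (\<lambda>a. of_bool (e a = th j))"
    unfolding mat_diag_diag by (auto simp: mat_diag_def intro!: eq_matI)
  moreover have "prim_idem n M th d j * M
      = (P * mat_diag n (\<lambda>a. of_bool (e a = th j)) * Q) * (P * mat_diag n e * Q)"
    by (subst E[OF j], subst Me) (rule refl)
  ultimately have "prim_idem n M th d j * M = P * (th j \<cdot>\<^sub>m mat_diag n (\<lambda>a. of_bool (e a = th j))) * Q"
    unfolding mult_conjugate_mat[OF P Q mat_diag_dim mat_diag_dim QP] by simp
  also have "\<dots> = th j \<cdot>\<^sub>m prim_idem n M th d j"
    unfolding E[OF j]
    by (simp add: mult_smult_distrib[OF P mat_diag_dim]
        mult_smult_assoc_mat[OF mult_carrier_mat[OF P mat_diag_dim] Q])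
  finally show ?thesis .
qed

end

lemma tridiagonal_systemD:
  assumes "tridiagonal_system n d A th As ths"
  shows "A \<in> carrier_mat n n" and "As \<in> carrier_mat n n"
    and "resolution_of_identity n d (prim_idem n A th d)"
    and "resolution_of_identity n d (prim_idem n As ths d)"
    and "\<And>k. k \<le> d \<Longrightarrow> prim_idem n As ths d k * As = ths k \<cdot>\<^sub>m prim_idem n As ths d k"
    and "\<And>k l. k \<le> d \<Longrightarrow> l \<le> d \<Longrightarrow> k + 1 < l \<Longrightarrow>
      prim_idem n A th d k * As * prim_idem n A th d l = 0\<^sub>m n n"
proof -
  note tri = assms[unfolded tridiagonal_system_def]
  show A: "A \<in> carrier_mat n n" and As: "As \<in> carrier_mat n n" using tri by blast+
  show "resolution_of_identity n d (prim_idem n A th d)"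
    using tri by (intro resolution_of_identity_prim_idem[OF A]) blast+
  show "resolution_of_identity n d (prim_idem n As ths d)"
    using tri by (intro resolution_of_identity_prim_idem[OF As]) blast+
  show "prim_idem n As ths d k * As = ths k \<cdot>\<^sub>m prim_idem n As ths d k" if "k \<le> d" for k
    using tri that by (intro prim_idem_mult_right[OF As]) blast+
  show "prim_idem n A th d k * As * prim_idem n A th d l = 0\<^sub>m n n"
    if "k \<le> d" "l \<le> d" "k + 1 < l" for k l
    using tri that by blast
qed

lemma split_comp_eq_kernels:
  assumes tri: "tridiagonal_system n d A th As ths" and i: "i \<le> d"
  shows "split_comp n d A th As ths i = {x \<in> carrier_vec n.
    (\<forall>k. i < k \<and> k \<le> d \<longrightarrow> prim_idem n As ths d k *\<^sub>v x = 0\<^sub>v n) \<and>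
    (\<forall>k<i. prim_idem n A th d k *\<^sub>v x = 0\<^sub>v n)}"
proof -
  have "{i..d} \<subseteq> {0..d}" "{0..i} \<subseteq> {0..d}" using i by auto
  note sums = subspace_sum_img_resolution[OF tridiagonal_systemD(3)[OF tri] this(1)]
    subspace_sum_img_resolution[OF tridiagonal_systemD(4)[OF tri] this(2)]
  show ?thesis unfolding split_comp_def sums using i by auto
qed

lemma split_comp_smult:
  assumes tri: "tridiagonal_system n d A th As ths" and i: "i \<le> d"
    and u: "u \<in> split_comp n d A th As ths i"
  shows "a \<cdot>\<^sub>v u \<in> split_comp n d A th As ths i"
proof -
  have uc: "u \<in> carrier_vec n" using u unfolding split_comp_eq_kernels[OF tri i] by auto
  have "prim_idem n A th d k *\<^sub>v (a \<cdot>\<^sub>v u) = a \<cdot>\<^sub>v (prim_idem n A th d k *\<^sub>v u)"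
    "prim_idem n As ths d k *\<^sub>v (a \<cdot>\<^sub>v u) = a \<cdot>\<^sub>v (prim_idem n As ths d k *\<^sub>v u)" if "k \<le> d" for k
    using tridiagonal_systemD(3,4)[OF tri] that mult_mat_vec[OF _ uc]
    unfolding resolution_of_identity_def by auto
  then show ?thesis using u i unfolding split_comp_eq_kernels[OF tri i] by auto
qed

lemma shift_mult_vec_split_comp:
  assumes tri: "tridiagonal_system n d A th As ths" and i: "Suc i \<le> d"
    and u: "u \<in> split_comp n d A th As ths (Suc i)"
  shows "(As - ths (Suc i) \<cdot>\<^sub>m 1\<^sub>m n) *\<^sub>v u \<in> split_comp n d A th As ths i"
proof -
  let ?E = "prim_idem n A th d" and ?Es = "prim_idem n As ths d"
  note E = tridiagonal_systemD(3,4)[OF tri]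
  note As = tridiagonal_systemD(2)[OF tri]
    and EsAs = tridiagonal_systemD(5)[OF tri]
    and band = tridiagonal_systemD(6)[OF tri]
  have Ec: "?E k \<in> carrier_mat n n" and Esc: "?Es k \<in> carrier_mat n n" if "k \<le> d" for k
    using E that unfolding resolution_of_identity_def by auto
  have uc: "u \<in> carrier_vec n"
    and uEs: "\<And>k. Suc i < k \<Longrightarrow> k \<le> d \<Longrightarrow> ?Es k *\<^sub>v u = 0\<^sub>v n"
    and uE: "\<And>k. k < Suc i \<Longrightarrow> ?E k *\<^sub>v u = 0\<^sub>v n"
    using u unfolding split_comp_eq_kernels[OF tri i] by auto
  define c where "c = ths (Suc i)"
  have w: "(As - c \<cdot>\<^sub>m 1\<^sub>m n) *\<^sub>v u = As *\<^sub>v u - c \<cdot>\<^sub>v u"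
    by (rule shift_mult_vec[OF As uc])
  have "?Es k *\<^sub>v (As *\<^sub>v u - c \<cdot>\<^sub>v u) = 0\<^sub>v n" if k: "i < k" "k \<le> d" for k
  proof -
    have "?Es k *\<^sub>v (As *\<^sub>v u) = ths k \<cdot>\<^sub>v (?Es k *\<^sub>v u)"
      using assoc_mult_mat_vec[OF Esc[OF k(2)] As uc, symmetric] EsAs[OF k(2)]
        smult_mat_mult_vec[OF Esc[OF k(2)] uc] by simp
    then have "?Es k *\<^sub>v (As *\<^sub>v u - c \<cdot>\<^sub>v u) = ths k \<cdot>\<^sub>v (?Es k *\<^sub>v u) - c \<cdot>\<^sub>v (?Es k *\<^sub>v u)"
      using Esc[OF k(2)] As uc by (simp add: mult_minus_distrib_mat_vec mult_mat_vec)
    moreover have "ths k = c \<or> ?Es k *\<^sub>v u = 0\<^sub>v n"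
      using uEs[of k] k unfolding c_def by (cases "k = Suc i") auto
    ultimately show ?thesis using Esc[OF k(2)] uc by (auto intro!: eq_vecI)
  qed
  moreover have "?E k *\<^sub>v (As *\<^sub>v u - c \<cdot>\<^sub>v u) = 0\<^sub>v n" if k: "k < i" for k
  proof -
    have "?E k *\<^sub>v (As *\<^sub>v u) = 0\<^sub>v n"
      using k i uE band by (intro resolution_band_mult_vec_zero[OF E(1) As uc]) auto
    then show ?thesis
      using Ec[of k] As uc uE[of k] k i by (simp add: mult_minus_distrib_mat_vec mult_mat_vec)
  qed
  moreover have "As *\<^sub>v u - c \<cdot>\<^sub>v u \<in> carrier_vec n" using As uc by simp
  ultimately show ?thesis
    unfolding c_def[symmetric] w split_comp_eq_kernels[OF tri less_imp_le[OF Suc_le_lessD[OF i]]] by auto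
qed

lemma affine_shift_mult_vec:
  fixes M K :: "'a::field mat"
  assumes M: "M \<in> carrier_mat n n" and K: "K \<in> carrier_mat n n" and u: "u \<in> carrier_vec n"
    and Ku: "K *\<^sub>v u = c \<cdot>\<^sub>v u"
  shows "(t \<cdot>\<^sub>m M + (1 - t) \<cdot>\<^sub>m K - c \<cdot>\<^sub>m 1\<^sub>m n) *\<^sub>v u = t \<cdot>\<^sub>v ((M - c \<cdot>\<^sub>m 1\<^sub>m n) *\<^sub>v u)"
proof -
  have "t \<cdot>\<^sub>m M + (1 - t) \<cdot>\<^sub>m K \<in> carrier_mat n n" using M K by simp
  then have "(t \<cdot>\<^sub>m M + (1 - t) \<cdot>\<^sub>m K - c \<cdot>\<^sub>m 1\<^sub>m n) *\<^sub>v u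
      = t \<cdot>\<^sub>v (M *\<^sub>v u) + (1 - t) \<cdot>\<^sub>v (c \<cdot>\<^sub>v u) - c \<cdot>\<^sub>v u"
    using M K u Ku
    by (simp add: shift_mult_vec add_mult_distrib_mat_vec[of _ n n] smult_mat_mult_vec)
  then show ?thesis using M u by (auto simp: shift_mult_vec algebra_simps intro!: eq_vecI)
qed

lemma shifted_prod_mult_vec_perturbation:
  fixes M N :: "'a::field mat" and U :: "nat \<Rightarrow> 'a vec set"
  assumes M: "M \<in> carrier_mat n n" and N: "N \<in> carrier_mat n n"
    and U: "\<And>i. i \<le> d \<Longrightarrow> U i \<subseteq> carrier_vec n"
    and smult: "\<And>i a u. i \<le> d \<Longrightarrow> u \<in> U i \<Longrightarrow> a \<cdot>\<^sub>v u \<in> U i"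
    and lower: "\<And>i u. Suc i \<le> d \<Longrightarrow> u \<in> U (Suc i) \<Longrightarrow> (M - c (Suc i) \<cdot>\<^sub>m 1\<^sub>m n) *\<^sub>v u \<in> U i"
    and perturbed: "\<And>i u. Suc i \<le> d \<Longrightarrow> u \<in> U (Suc i) \<Longrightarrow>
      (N - c (Suc i) \<cdot>\<^sub>m 1\<^sub>m n) *\<^sub>v u = t \<cdot>\<^sub>v ((M - c (Suc i) \<cdot>\<^sub>m 1\<^sub>m n) *\<^sub>v u)"
  shows "i \<le> d \<Longrightarrow> u \<in> U i \<Longrightarrow>
    shifted_prod n N c i *\<^sub>v u = t ^ i \<cdot>\<^sub>v (shifted_prod n M c i *\<^sub>v u) \<and>
    shifted_prod n N c i *\<^sub>v u \<in> U 0"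
proof (induction i arbitrary: u)
  case 0
  then show ?case using U[of 0] by auto
next
  case (Suc i)
  define w where "w = (M - c (Suc i) \<cdot>\<^sub>m 1\<^sub>m n) *\<^sub>v u"
  have u: "u \<in> carrier_vec n" using Suc.prems U by blast
  have wU: "w \<in> U i" unfolding w_def using lower Suc.prems .
  then have w: "w \<in> carrier_vec n" using U[of i] Suc.prems(1) by auto
  have IH: "shifted_prod n N c i *\<^sub>v (t \<cdot>\<^sub>v w) = t ^ i \<cdot>\<^sub>v (shifted_prod n M c i *\<^sub>v (t \<cdot>\<^sub>v w))"
    "shifted_prod n N c i *\<^sub>v (t \<cdot>\<^sub>v w) \<in> U 0"
    using Suc.IH[of "t \<cdot>\<^sub>v w"] smult[OF _ wU] Suc.prems by auto
  have "N - c (Suc i) \<cdot>\<^sub>m 1\<^sub>m n \<in> carrier_mat n n" "M - c (Suc i) \<cdot>\<^sub>m 1\<^sub>m n \<in> carrier_mat n n"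
    using M N by auto
  then have "shifted_prod n N c (Suc i) *\<^sub>v u = shifted_prod n N c i *\<^sub>v (t \<cdot>\<^sub>v w)"
    and "shifted_prod n M c (Suc i) *\<^sub>v u = shifted_prod n M c i *\<^sub>v w"
    using assoc_mult_mat_vec[OF shifted_prod_carrier[OF N] _ u] assoc_mult_mat_vec[OF shifted_prod_carrier[OF M] _ u]
      perturbed[OF Suc.prems] unfolding w_def by simp_all
  moreover have "shifted_prod n M c i *\<^sub>v (t \<cdot>\<^sub>v w) = t \<cdot>\<^sub>v (shifted_prod n M c i *\<^sub>v w)"
    by (rule mult_mat_vec[OF shifted_prod_carrier[OF M] w])
  ultimately show ?case using IH by (simp add: smult_smult_assoc mult.commute)
qed

theorem lemma7p5:
  fixes n d :: nat and q t :: "'a::alg_closed_field"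
    and A As K B Bs :: "'a mat" and th ths :: "nat \<Rightarrow> 'a"
  assumes "n > 0"
    and "q \<noteq> 0" and "\<forall>m::nat. m > 0 \<longrightarrow> q ^ m \<noteq> 1"
    and "d \<ge> 1"
    and "\<forall>i. th i = q powi (2 * int i - int d)"
    and "\<forall>i. ths i = q powi (int d - 2 * int i)"
    and "tridiagonal_system n d A th As ths"
    and "q_serre n q A As"
    and "K \<in> carrier_mat n n"
    and "\<forall>i\<le>d. \<forall>u\<in>split_comp n d A th As ths i. K *\<^sub>v u = (q powi (int d - 2 * int i)) \<cdot>\<^sub>v u"
    and "B = A"
    and "Bs = t \<cdot>\<^sub>m As + (1 - t) \<cdot>\<^sub>m K"
  shows "\<forall>i\<le>d. \<forall>u\<in>split_comp n d A th As ths i.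
           shifted_prod n Bs ths i *\<^sub>v u = t ^ i \<cdot>\<^sub>v (shifted_prod n As ths i *\<^sub>v u) \<and>
           shifted_prod n Bs ths i *\<^sub>v u \<in> split_comp n d A th As ths 0"
proof -
  note tri = assms(7)
  let ?U = "split_comp n d A th As ths"
  note As = tridiagonal_systemD(2)[OF tri]
  have Bs: "Bs \<in> carrier_mat n n" using As assms(9,12) by simp
  have U: "?U i \<subseteq> carrier_vec n" if "i \<le> d" for i
    using split_comp_eq_kernels[OF tri that] by auto
  have perturbed: "(Bs - ths (Suc i) \<cdot>\<^sub>m 1\<^sub>m n) *\<^sub>v u = t \<cdot>\<^sub>v ((As - ths (Suc i) \<cdot>\<^sub>m 1\<^sub>m n) *\<^sub>v u)"
    if "Suc i \<le> d" "u \<in> ?U (Suc i)" for i u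
    unfolding assms(12) using U[of "Suc i"] assms(6,10) that
    by (intro affine_shift_mult_vec[OF As assms(9)]) auto
  show ?thesis
    using shifted_prod_mult_vec_perturbation[where U = ?U, OF As Bs U split_comp_smult[OF tri]
        shift_mult_vec_split_comp[OF tri] perturbed]
    by blast
qed

end
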